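(* If $G\subset \mathrm{Diff}^1_+([0,1])$ is $C^1$-close to the identity, then $G$ is without linked fixed points.
   Context: A group $G\subset \mathrm{Diff}^1_+([0,1])$ is $C^1$-close to the identity if there is a sequence $h_n\in \mathrm{Diff}^1_+([0,1])$ such that $h_n g h_n^{-1}\to \mathrm{id}$ in the $C^1$-topology as $n\to\infty$, for every $g\in G$. For a group $G$ of homeomorphisms of $[0,1]$, a pair of successive fixed points of $G$ is a pair $\{a,b\}$, $a<b$, such that $(a,b)$ is a connected component of $[0,1]\setminus \mathrm{Fix}(g)$ for some $g\in G$. Two pairs $\{a,b\}$ and $\{c,d\}$ are linked if $(a,b)\cap\{c,d\}$ or $(c,d)\cap\{a,b\}$ consists of exactly one point. $G$ is without linked fixed points if no two pairs of successive fixed points of $G$ are linked. *)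

theory Defs
  imports "HOL-Analysis.Analysis"
begin

text \<open>Maps are real functions; only their values on [0,1] are relevant.\<close>

definition C1_on01 :: "(real \<Rightarrow> real) \<Rightarrow> bool" where
  "C1_on01 f \<longleftrightarrow> (\<exists>f'. continuous_on {0..1} f' \<and>
      (\<forall>x\<in>{0..1}. (f has_real_derivative f' x) (at x within {0..1})))"

definition Diff1p :: "(real \<Rightarrow> real) set" where
  "Diff1p = {f. bij_betw f {0..1} {0..1} \<and> strict_mono_on {0..1} f \<and>
      C1_on01 f \<and> C1_on01 (inv_into {0..1} f)}"

definition is_group01 :: "(real \<Rightarrow> real) set \<Rightarrow> bool" where
  "is_group01 G \<longleftrightarrow> G \<subseteq> Diff1p \<and>
     (\<exists>k\<in>G. \<forall>x\<in>{0..1}. k x = x) \<and>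
     (\<forall>f\<in>G. \<forall>g\<in>G. \<exists>k\<in>G. \<forall>x\<in>{0..1}. k x = f (g x)) \<and>
     (\<forall>g\<in>G. \<exists>k\<in>G. \<forall>x\<in>{0..1}. k x = inv_into {0..1} g x)"

definition C1_tendsto_id :: "(nat \<Rightarrow> real \<Rightarrow> real) \<Rightarrow> bool" where
  "C1_tendsto_id k \<longleftrightarrow> (\<exists>d :: nat \<Rightarrow> real \<Rightarrow> real.
      (\<forall>n. \<forall>x\<in>{0..1}. (k n has_real_derivative d n x) (at x within {0..1})) \<and>
      (\<forall>e>0. \<forall>\<^sub>F n in sequentially. \<forall>x\<in>{0..1}.
           \<bar>k n x - x\<bar> < e \<and> \<bar>d n x - 1\<bar> < e))"

definition C1_close_to_id :: "(real \<Rightarrow> real) set \<Rightarrow> bool" where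
  "C1_close_to_id G \<longleftrightarrow> (\<exists>h :: nat \<Rightarrow> real \<Rightarrow> real. (\<forall>n. h n \<in> Diff1p) \<and>
      (\<forall>g\<in>G. C1_tendsto_id (\<lambda>n x. h n (g (inv_into {0..1} (h n) x)))))"

definition Fix01 :: "(real \<Rightarrow> real) \<Rightarrow> real set" where
  "Fix01 g = {x\<in>{0..1}. g x = x}"

definition succ_fixed_pair :: "(real \<Rightarrow> real) set \<Rightarrow> real \<Rightarrow> real \<Rightarrow> bool" where
  "succ_fixed_pair G a b \<longleftrightarrow> a < b \<and>
     (\<exists>g\<in>G. {a<..<b} \<in> components ({0..1} - Fix01 g))"

definition linked :: "real \<Rightarrow> real \<Rightarrow> real \<Rightarrow> real \<Rightarrow> bool" where
  "linked a b c d \<longleftrightarrow> card ({a<..<b} \<inter> {c, d}) = 1 \<or> card ({c<..<d} \<inter> {a, b}) = 1"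

definition without_linked_fixed_points :: "(real \<Rightarrow> real) set \<Rightarrow> bool" where
  "without_linked_fixed_points G \<longleftrightarrow>
     \<not> (\<exists>a b c d. succ_fixed_pair G a b \<and> succ_fixed_pair G c d \<and> linked a b c d)"

end

theory Submission
  imports Defs
begin

text \<open>After conjugating by \<open>h\<^sub>n\<close> for large n, any two elements of G have derivative
  close to 1 on [0,1], so each of them stretches every interval [u,v] by a factor at least 3/4.
  Hence no two elements A, B can map [u,v] into two subintervals of [u,v] with disjoint
  interiors: their lengths would add up to at least 3/2 times the length of [u,v].
  If two pairs of successive fixed points were linked, say \<open>a < c < b \<le> d\<close>, take
  P \<in> G pushing (a,b) to the right and Q \<in> G pushing (c,d) to the left. The Q-orbits in
  (c,b) converge to c, so for suitable m, n the maps \<open>Q\<^sup>m \<circ> P\<close> and \<open>Q\<^sup>n \<circ> P\<close> put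
  [c, P c] into exactly this forbidden position. The case of a common left endpoint is the
  mirror image of this one.\<close>

definition splits_interval :: "(real \<Rightarrow> real) \<Rightarrow> (real \<Rightarrow> real) \<Rightarrow> real \<Rightarrow> real \<Rightarrow> bool" where
  "splits_interval A B u v \<longleftrightarrow> u < v \<and> u \<le> A u \<and> A v \<le> B u \<and> B v \<le> v"

lemma Diff1p_strict_mono: "f \<in> Diff1p \<Longrightarrow> strict_mono_on {0..1} f"
  by (simp add: Diff1p_def)

lemma Diff1p_mono: "f \<in> Diff1p \<Longrightarrow> x \<in> {0..1} \<Longrightarrow> y \<in> {0..1} \<Longrightarrow> x \<le> y \<Longrightarrow> f x \<le> f y"
  by (metis Diff1p_strict_mono order_le_less strict_mono_onD)

lemma Diff1p_maps_into: "f \<in> Diff1p \<Longrightarrow> x \<in> {0..1} \<Longrightarrow> f x \<in> {0..1}"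
  unfolding Diff1p_def by (auto dest: bij_betwE)

lemma Diff1p_image: "f \<in> Diff1p \<Longrightarrow> f ` {0..1} = {0..1}"
  by (simp add: Diff1p_def bij_betw_def)

lemma Diff1p_continuous: "f \<in> Diff1p \<Longrightarrow> continuous_on {0..1} f"
  unfolding Diff1p_def C1_on01_def by (auto intro: DERIV_continuous_on)

lemma Diff1p_maps_Ioo:
  assumes "f \<in> Diff1p" "0 \<le> a" "b \<le> 1" "f a = a" "f b = b" "x \<in> {a<..<b}"
  shows "f x \<in> {a<..<b}"
  using strict_mono_onD[OF Diff1p_strict_mono[OF assms(1)], of a x]
    strict_mono_onD[OF Diff1p_strict_mono[OF assms(1)], of x b] assms by auto

lemma increment_ge_if_deriv_ge:
  fixes k d :: "real \<Rightarrow> real"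
  assumes deriv: "\<forall>x\<in>{a..b}. (k has_real_derivative d x) (at x within {a..b})"
    and bound: "\<forall>x\<in>{a..b}. c \<le> d x" and "a \<le> p" "p \<le> q" "q \<le> b"
  shows "c * (q - p) \<le> k q - k p"
proof -
  have "(\<lambda>x. k x - c * x) p \<le> (\<lambda>x. k x - c * x) q"
  proof (rule DERIV_nonneg_imp_increasing_open[OF \<open>p \<le> q\<close>])
    fix x assume "p < x" "x < q"
    then have x: "x \<in> {a..b}" "a < x" "x < b" using assms by auto
    then have "(k has_real_derivative d x) (at x)" using deriv at_within_Icc_at by metis
    then have "((\<lambda>x. k x - c * x) has_real_derivative d x - c) (at x)"
      by (auto intro!: derivative_eq_intros)
    then show "\<exists>y. ((\<lambda>x. k x - c * x) has_real_derivative y) (at x) \<and> 0 \<le> y"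
      using bound x(1) by force
  next
    have "continuous_on {a..b} k" using deriv by (intro DERIV_continuous_on) auto
    then show "continuous_on {p..q} (\<lambda>x. k x - c * x)"
      using assms by (auto intro!: continuous_intros elim: continuous_on_subset)
  qed
  then show ?thesis by (simp add: algebra_simps)
qed

definition expands_by :: "real \<Rightarrow> (real \<Rightarrow> real) \<Rightarrow> bool" where
  "expands_by c f \<longleftrightarrow> (\<forall>p\<in>{0..1}. \<forall>q\<in>{0..1}. p \<le> q \<longrightarrow> c * (q - p) \<le> f q - f p)"

lemma C1_tendsto_id_eventually_expands_by:
  assumes "C1_tendsto_id k" "c < 1"
  shows "\<forall>\<^sub>F n in sequentially. expands_by c (k n)"
proof -
  obtain d where deriv: "\<forall>n. \<forall>x\<in>{0..1}. (k n has_real_derivative d n x) (at x within {0..1})"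
    and close: "\<forall>e>0. \<forall>\<^sub>F n in sequentially. \<forall>x\<in>{0..1}. \<bar>k n x - x\<bar> < e \<and> \<bar>d n x - 1\<bar> < e"
    using assms(1) unfolding C1_tendsto_id_def by blast
  have "\<forall>\<^sub>F n in sequentially. \<forall>x\<in>{0..1}. c \<le> d n x"
    using close[rule_format, of "1 - c"] assms(2) by (auto elim!: eventually_mono)
  then show ?thesis
  proof (rule eventually_mono)
    fix n assume "\<forall>x\<in>{0..1}. c \<le> d n x"
    then show "expands_by c (k n)"
      using deriv increment_ge_if_deriv_ge[of 0 1 "k n" "d n" c] by (auto simp: expands_by_def)
  qed
qed

lemma C1_close_to_id_not_splits_interval:
  assumes "C1_close_to_id G" "A \<in> G" "B \<in> G" "A \<in> Diff1p" "B \<in> Diff1p"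
    "u \<in> {0..1}" "v \<in> {0..1}"
  shows "\<not> splits_interval A B u v"
proof
  assume split: "splits_interval A B u v"
  obtain h where h: "\<forall>n. h n \<in> Diff1p"
    and conj: "\<forall>g\<in>G. C1_tendsto_id (\<lambda>n x. h n (g (inv_into {0..1} (h n) x)))"
    using assms(1) unfolding C1_close_to_id_def by blast
  have "\<forall>g\<in>{A, B}. \<forall>\<^sub>F n in sequentially.
      expands_by (3/4) (\<lambda>x. h n (g (inv_into {0..1} (h n) x)))"
    using C1_tendsto_id_eventually_expands_by[of _ "3/4"] conj assms(2,3) by simp
  then have "\<forall>\<^sub>F n in sequentially. \<forall>g\<in>{A, B}.
      expands_by (3/4) (\<lambda>x. h n (g (inv_into {0..1} (h n) x)))"
    by (intro eventually_ball_finite) simp_all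
  from eventually_happens'[OF sequentially_bot this] obtain N
    where expands: "\<forall>g\<in>{A, B}. expands_by (3/4) (\<lambda>x. h N (g (inv_into {0..1} (h N) x)))" ..
  define H where "H = h N"
  have H: "H \<in> Diff1p" using h H_def by simp
  have "H u < H v"
    using split assms(6,7) strict_mono_onD[OF Diff1p_strict_mono[OF H]]
    by (auto simp: splits_interval_def)
  moreover have "inv_into {0..1} H (H x) = x" if "x \<in> {0..1}" for x
    using strict_mono_on_imp_inj_on[OF Diff1p_strict_mono[OF H]] that by simp
  ultimately have "3/4 * (H v - H u) \<le> H (g v) - H (g u)" if "g \<in> {A, B}" for g
    using expands[unfolded H_def[symmetric]] that assms(6,7) Diff1p_maps_into[OF H]
    unfolding expands_by_def by (metis less_eq_real_def)
  then have "3/4 * (H v - H u) \<le> H (A v) - H (A u)" "3/4 * (H v - H u) \<le> H (B v) - H (B u)"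
    by auto
  moreover have "H u \<le> H (A u)" "H (A v) \<le> H (B u)" "H (B v) \<le> H v"
    using split assms(4-7) Diff1p_mono[OF H] Diff1p_maps_into by (simp_all add: splits_interval_def)
  ultimately show False using \<open>H u < H v\<close> by (simp add: field_simps)
qed

lemma is_group01_subset: "is_group01 G \<Longrightarrow> G \<subseteq> Diff1p"
  by (simp add: is_group01_def)

lemma is_group01_comp: "is_group01 G \<Longrightarrow> f \<in> G \<Longrightarrow> g \<in> G \<Longrightarrow> \<exists>k\<in>G. \<forall>x\<in>{0..1}. k x = f (g x)"
  unfolding is_group01_def by blast

lemma is_group01_inverse:
  "is_group01 G \<Longrightarrow> g \<in> G \<Longrightarrow> \<exists>k\<in>G. \<forall>x\<in>{0..1}. k x = inv_into {0..1} g x"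
  unfolding is_group01_def by blast

lemma is_group01_funpow_comp:
  assumes "is_group01 G" "P \<in> G" "Q \<in> G"
  shows "\<exists>k\<in>G. \<forall>x\<in>{0..1}. k x = (Q ^^ m) (P x)"
proof (induction m)
  case 0
  show ?case using assms(2) by auto
next
  case (Suc m)
  then obtain k where k: "k \<in> G" "\<forall>x\<in>{0..1}. k x = (Q ^^ m) (P x)" by blast
  obtain k' where "k' \<in> G" "\<forall>x\<in>{0..1}. k' x = Q (k x)"
    using is_group01_comp[OF assms(1,3) k(1)] by blast
  then show ?case using k(2) by auto
qed

lemma is_group01_not_splits_interval_funpow:
  assumes "is_group01 G" "C1_close_to_id G" "P \<in> G" "Q \<in> G" "u \<in> {0..1}" "v \<in> {0..1}"
  shows "\<not> splits_interval (\<lambda>x. (Q ^^ m) (P x)) (\<lambda>x. (Q ^^ n) (P x)) u v"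
proof
  obtain A where A: "A \<in> G" "\<forall>x\<in>{0..1}. A x = (Q ^^ m) (P x)"
    using is_group01_funpow_comp[OF assms(1,3,4)] by blast
  obtain B where B: "B \<in> G" "\<forall>x\<in>{0..1}. B x = (Q ^^ n) (P x)"
    using is_group01_funpow_comp[OF assms(1,3,4)] by blast
  assume "splits_interval (\<lambda>x. (Q ^^ m) (P x)) (\<lambda>x. (Q ^^ n) (P x)) u v"
  then have "splits_interval A B u v"
    using A(2) B(2) assms(5,6) by (simp add: splits_interval_def)
  moreover have "A \<in> Diff1p" "B \<in> Diff1p"
    using is_group01_subset[OF assms(1)] A(1) B(1) by auto
  ultimately show False
    using C1_close_to_id_not_splits_interval[OF assms(2) A(1) B(1) _ _ assms(5,6)] by blast
qed

lemma sign_constant_if_no_fixed_point: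
  fixes g :: "real \<Rightarrow> real"
  assumes "continuous_on {a<..<b} g" "\<forall>x\<in>{a<..<b}. g x \<noteq> x"
  shows "(\<forall>x\<in>{a<..<b}. x < g x) \<or> (\<forall>x\<in>{a<..<b}. g x < x)"
proof (rule ccontr)
  assume "\<not> ?thesis"
  then obtain x y where x: "x \<in> {a<..<b}" "g x - x \<le> 0" and y: "y \<in> {a<..<b}" "0 \<le> g y - y"
    by (auto simp: not_less)
  have "connected ((\<lambda>t. g t - t) ` {a<..<b})"
    by (intro connected_continuous_image continuous_intros assms(1)) auto
  then have "0 \<in> (\<lambda>t. g t - t) ` {a<..<b}"
    unfolding connected_iff_interval using x y by blast
  then show False using assms(2) by auto
qed

lemma funpow_mem_Ioc:
  fixes Q :: "real \<Rightarrow> real"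
  assumes "\<forall>x\<in>{c<..<b}. c < Q x \<and> Q x < x" "y \<in> {c<..<b}"
  shows "(Q ^^ K) y \<in> {c<..y}"
proof (induction K)
  case (Suc K)
  then have "(Q ^^ K) y \<in> {c<..<b}" using assms(2) by auto
  then show ?case using assms(1) Suc by force
qed (use assms(2) in auto)

text \<open>The limit of an orbit staying above z would be a fixed point of Q in (c,b).\<close>
lemma funpow_eventually_below:
  fixes Q :: "real \<Rightarrow> real"
  assumes cont: "continuous_on {c<..<b} Q" and push: "\<forall>x\<in>{c<..<b}. c < Q x \<and> Q x < x"
    and "y \<in> {c<..<b}" "c < z"
  shows "\<exists>K. (Q ^^ K) y < z"
proof (rule ccontr)
  assume "\<not> ?thesis"
  then have ge: "z \<le> (Q ^^ K) y" for K by (simp add: not_less)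
  define s where "s K = (Q ^^ K) y" for K
  have s: "s K \<in> {c<..<b}" for K
    using funpow_mem_Ioc[OF push \<open>y \<in> {c<..<b}\<close>, of K] \<open>y \<in> {c<..<b}\<close> unfolding s_def by auto
  have sSuc: "s (Suc K) = Q (s K)" for K unfolding s_def by simp
  have "decseq s"
    using push[rule_format, OF s] by (intro decseq_SucI) (simp add: sSuc less_imp_le)
  then obtain L where L: "s \<longlonglongrightarrow> L" "\<forall>i. L \<le> s i"
    using decseq_convergent[of s z] ge unfolding s_def by auto
  have "z \<le> L" using L(1) ge unfolding s_def by (intro LIMSEQ_le_const) auto
  moreover have "L \<le> y" using L(2)[rule_format, of 0] unfolding s_def by simp
  ultimately have Lcb: "L \<in> {c<..<b}" using \<open>c < z\<close> \<open>y \<in> {c<..<b}\<close> by auto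
  have "(\<lambda>K. Q (s K)) \<longlonglongrightarrow> Q L"
    using continuous_on_tendsto_compose[OF cont L(1) Lcb] s by simp
  moreover have "(\<lambda>K. Q (s K)) \<longlonglongrightarrow> L"
    using LIMSEQ_Suc[OF L(1)] by (simp add: sSuc)
  ultimately have "Q L = L" using LIMSEQ_unique by blast
  then show False using push Lcb by force
qed

lemma splits_interval_funpow:
  fixes P Q :: "real \<Rightarrow> real"
  assumes "c < b" and P: "\<forall>x\<in>{c..<b}. x < P x \<and> P x < b"
    and cont: "continuous_on {c<..<b} Q" and push: "\<forall>x\<in>{c<..<b}. c < Q x \<and> Q x < x"
  shows "\<exists>m n. splits_interval (\<lambda>x. (Q ^^ m) (P x)) (\<lambda>x. (Q ^^ n) (P x)) c (P c)"
proof -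
  \<comment> \<open>With e = P c: first n pushes \<open>Q\<^sup>n (P e)\<close> below e, then K pushes
    \<open>Q\<^sup>K (Q\<^sup>n (P e))\<close> below \<open>Q\<^sup>n e\<close>.\<close>
  define e where "e = P c"
  have e: "e \<in> {c<..<b}" using assms(1) P unfolding e_def by auto
  then have Pe: "P e \<in> {c<..<b}" using P[rule_format, of e] by auto
  obtain n where n: "(Q ^^ n) (P e) < e"
    using funpow_eventually_below[OF cont push Pe] e by auto
  have Qne: "(Q ^^ n) e \<in> {c<..e}" and "(Q ^^ n) (P e) \<in> {c<..P e}"
    using funpow_mem_Ioc[OF push] e Pe by auto
  then obtain K where K: "(Q ^^ K) ((Q ^^ n) (P e)) < (Q ^^ n) e"
    using funpow_eventually_below[OF cont push, of "(Q ^^ n) (P e)"] Pe by auto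
  have "(Q ^^ K) ((Q ^^ n) e) \<in> {c<..(Q ^^ n) e}"
    using funpow_mem_Ioc[OF push] Qne e by auto
  then have "splits_interval (\<lambda>x. (Q ^^ (K + n)) (P x)) (\<lambda>x. (Q ^^ n) (P x)) c e"
    using e n K unfolding splits_interval_def e_def by (simp add: funpow_add)
  then show ?thesis unfolding e_def by blast
qed

lemma funpow_reflect:
  fixes Q :: "real \<Rightarrow> real"
  shows "((\<lambda>x. - Q (- x)) ^^ K) x = - (Q ^^ K) (- x)"
  by (induction K arbitrary: x) simp_all

text \<open>The reflection \<open>x \<mapsto> -x\<close> reduces this to the previous lemma: it preserves
  splits_interval up to exchanging the two maps and reflecting the interval.\<close>
lemma splits_interval_funpow_reflected:
  fixes R Q :: "real \<Rightarrow> real"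
  assumes "a < d" and R: "\<forall>x\<in>{a<..d}. a < R x \<and> R x < x"
    and cont: "continuous_on {a<..<d} Q" and push: "\<forall>x\<in>{a<..<d}. x < Q x \<and> Q x < d"
  shows "\<exists>m n. splits_interval (\<lambda>x. (Q ^^ m) (R x)) (\<lambda>x. (Q ^^ n) (R x)) (R d) d"
proof -
  have "\<forall>x\<in>{-d..<-a}. x < - R (- x) \<and> - R (- x) < - a"
  proof
    fix x assume "x \<in> {-d..<-a}"
    then show "x < - R (- x) \<and> - R (- x) < - a" using R[rule_format, of "- x"] by auto
  qed
  moreover have "continuous_on {-d<..<-a} (\<lambda>x. - Q (- x))"
    by (intro continuous_intros continuous_on_compose2[OF cont]) auto
  moreover have "\<forall>x\<in>{-d<..<-a}. -d < - Q (- x) \<and> - Q (- x) < x"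
  proof
    fix x assume "x \<in> {-d<..<-a}"
    then show "-d < - Q (- x) \<and> - Q (- x) < x" using push[rule_format, of "- x"] by auto
  qed
  ultimately obtain m n where "splits_interval (\<lambda>x. ((\<lambda>x. - Q (- x)) ^^ m) (- R (- x)))
      (\<lambda>x. ((\<lambda>x. - Q (- x)) ^^ n) (- R (- x))) (- d) (- R d)"
    using splits_interval_funpow[of "-d" "-a" "\<lambda>x. - R (- x)" "\<lambda>x. - Q (- x)"] \<open>a < d\<close> by auto
  then have "splits_interval (\<lambda>x. (Q ^^ n) (R x)) (\<lambda>x. (Q ^^ m) (R x)) (R d) d"
    unfolding splits_interval_def funpow_reflect by auto
  then show ?thesis by blast
qed

lemma components_Ioo_endpoints_not_mem:
  fixes S :: "real set"
  assumes "{a<..<b} \<in> components S" "a < b"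
  shows "a \<notin> S" "b \<notin> S"
proof -
  have sub: "{a<..<b} \<subseteq> S"
    and max: "\<And>D. D \<noteq> {} \<Longrightarrow> {a<..<b} \<subseteq> D \<Longrightarrow> D \<subseteq> S \<Longrightarrow> connected D \<Longrightarrow> D = {a<..<b}"
    using assms(1) unfolding in_components_maximal by auto
  show "a \<notin> S"
  proof
    assume "a \<in> S"
    then have "{a..<b} = {a<..<b}" using sub assms(2) by (intro max) (auto simp: order.order_iff_strict)
    then show False using assms(2) by (metis atLeastLessThan_iff greaterThanLessThan_iff order_refl less_irrefl)
  qed
  show "b \<notin> S"
  proof
    assume "b \<in> S"
    then have "{a<..b} = {a<..<b}" using sub assms(2) by (intro max) (auto simp: order.order_iff_strict)
    then show False using assms(2) by (metis greaterThanAtMost_iff greaterThanLessThan_iff order_refl less_irrefl)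
  qed
qed

lemma succ_fixed_pairE:
  assumes "succ_fixed_pair G a b"
  obtains g where "g \<in> G" "a < b" "0 \<le> a" "b \<le> 1" "g a = a" "g b = b"
    "\<forall>x\<in>{a<..<b}. g x \<noteq> x"
proof -
  have "a < b" using assms by (simp add: succ_fixed_pair_def)
  obtain g where "g \<in> G" and comp: "{a<..<b} \<in> components ({0..1} - Fix01 g)"
    using assms unfolding succ_fixed_pair_def by blast
  have "closure {a<..<b} \<subseteq> {0..1}"
    using in_components_subset[OF comp] by (intro closure_minimal) auto
  then have "{a..b} \<subseteq> {0..1}" using \<open>a < b\<close> by simp
  moreover have "\<forall>x\<in>{a<..<b}. g x \<noteq> x"
    using in_components_subset[OF comp] by (auto simp: Fix01_def)
  ultimately show thesis
    using that[OF \<open>g \<in> G\<close> \<open>a < b\<close>] components_Ioo_endpoints_not_mem[OF comp \<open>a < b\<close>] \<open>a < b\<close>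
    by (auto simp: Fix01_def)
qed

lemma succ_fixed_pair_bounds:
  assumes "succ_fixed_pair G a b"
  shows "a < b" "0 \<le> a" "b \<le> 1"
  using succ_fixed_pairE[OF assms] by metis+

lemma succ_fixed_pair_pushing_elements:
  assumes "is_group01 G" "succ_fixed_pair G a b"
  shows "\<exists>P\<in>G. \<forall>x\<in>{a<..<b}. x < P x \<and> P x < b"
    and "\<exists>Q\<in>G. \<forall>x\<in>{a<..<b}. a < Q x \<and> Q x < x"
proof -
  obtain g where "g \<in> G" "a < b" "0 \<le> a" "b \<le> 1" "g a = a" "g b = b"
    and moves: "\<forall>x\<in>{a<..<b}. g x \<noteq> x"
    using succ_fixed_pairE[OF assms(2)] by blast
  then have ab: "{a..b} \<subseteq> {0..1}" by auto
  have g: "g \<in> Diff1p" using is_group01_subset[OF assms(1)] \<open>g \<in> G\<close> by blast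
  obtain k where "k \<in> G" and k: "\<forall>x\<in>{0..1}. k x = inv_into {0..1} g x"
    using is_group01_inverse[OF assms(1) \<open>g \<in> G\<close>] by blast
  have "inj_on g {0..1}" by (rule strict_mono_on_imp_inj_on[OF Diff1p_strict_mono[OF g]])
  then have "k x = x" if "x \<in> {0..1}" "g x = x" for x
    using inv_into_f_f[OF \<open>inj_on g {0..1}\<close> that(1)] k that by simp
  then have "k a = a" "k b = b" using ab \<open>g a = a\<close> \<open>g b = b\<close> \<open>a < b\<close> by auto
  have gk: "g (k x) = x" if "x \<in> {0..1}" for x
    using f_inv_into_f[of x g "{0..1}"] Diff1p_image[OF g] k that by simp
  have into: "g x \<in> {a<..<b}" "k x \<in> {a<..<b}" if "x \<in> {a<..<b}" for x
    using Diff1p_maps_Ioo[OF g _ _ \<open>g a = a\<close> \<open>g b = b\<close> that]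
      Diff1p_maps_Ioo[OF _ _ _ \<open>k a = a\<close> \<open>k b = b\<close> that]
      is_group01_subset[OF assms(1)] \<open>k \<in> G\<close> \<open>0 \<le> a\<close> \<open>b \<le> 1\<close> by auto
  have "continuous_on {a<..<b} g"
    by (rule continuous_on_subset[OF Diff1p_continuous[OF g]]) (use ab in auto)
  moreover have "k x \<in> {a<..<b} \<and> g (k x) = x" if "x \<in> {a<..<b}" for x
    using into gk that ab by auto
  \<comment> \<open>k inverts g on (a,b), so it moves every point in the opposite direction\<close>
  ultimately have flip: "(\<forall>x\<in>{a<..<b}. x < g x \<and> k x < x) \<or> (\<forall>x\<in>{a<..<b}. g x < x \<and> x < k x)"
    using sign_constant_if_no_fixed_point[OF _ moves] by metis
  then show "\<exists>P\<in>G. \<forall>x\<in>{a<..<b}. x < P x \<and> P x < b"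
    using into \<open>g \<in> G\<close> \<open>k \<in> G\<close> by (metis greaterThanLessThan_iff)
  show "\<exists>Q\<in>G. \<forall>x\<in>{a<..<b}. a < Q x \<and> Q x < x"
    using flip into \<open>g \<in> G\<close> \<open>k \<in> G\<close> by (metis greaterThanLessThan_iff)
qed

lemma succ_fixed_pairs_not_crossing:
  assumes G: "is_group01 G" "C1_close_to_id G"
    and ab: "succ_fixed_pair G a b" and cd: "succ_fixed_pair G c d"
    and "a < c" "c < b" "b \<le> d"
  shows False
proof -
  obtain P where "P \<in> G" and P: "\<forall>x\<in>{a<..<b}. x < P x \<and> P x < b"
    using succ_fixed_pair_pushing_elements(1)[OF G(1) ab] by blast
  obtain Q where "Q \<in> G" and Q: "\<forall>x\<in>{c<..<d}. c < Q x \<and> Q x < x"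
    using succ_fixed_pair_pushing_elements(2)[OF G(1) cd] by blast
  note pab = succ_fixed_pair_bounds[OF ab]
  have "continuous_on {c<..<b} Q"
    using is_group01_subset[OF G(1)] \<open>Q \<in> G\<close> pab(2,3) \<open>a < c\<close>
    by (intro continuous_on_subset[OF Diff1p_continuous]) auto
  then obtain m n where "splits_interval (\<lambda>x. (Q ^^ m) (P x)) (\<lambda>x. (Q ^^ n) (P x)) c (P c)"
    using splits_interval_funpow[of c b P Q] P Q assms(5-7) by auto
  moreover have "c \<in> {0..1}" "P c \<in> {0..1}" using P[rule_format, of c] pab(2,3) assms(5,6) by auto
  ultimately show False
    using is_group01_not_splits_interval_funpow[OF G \<open>P \<in> G\<close> \<open>Q \<in> G\<close>] by blast
qed

lemma succ_fixed_pairs_not_nested_left: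
  assumes G: "is_group01 G" "C1_close_to_id G"
    and ab: "succ_fixed_pair G a b" and ad: "succ_fixed_pair G a d" and "d < b"
  shows False
proof -
  obtain R where "R \<in> G" and R: "\<forall>x\<in>{a<..<b}. a < R x \<and> R x < x"
    using succ_fixed_pair_pushing_elements(2)[OF G(1) ab] by blast
  obtain Q where "Q \<in> G" and Q: "\<forall>x\<in>{a<..<d}. x < Q x \<and> Q x < d"
    using succ_fixed_pair_pushing_elements(1)[OF G(1) ad] by blast
  note pab = succ_fixed_pair_bounds[OF ab]
  note pad = succ_fixed_pair_bounds[OF ad]
  have "continuous_on {a<..<d} Q"
    using is_group01_subset[OF G(1)] \<open>Q \<in> G\<close> pab(2,3) \<open>d < b\<close>
    by (intro continuous_on_subset[OF Diff1p_continuous]) auto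
  then obtain m n where "splits_interval (\<lambda>x. (Q ^^ m) (R x)) (\<lambda>x. (Q ^^ n) (R x)) (R d) d"
    using splits_interval_funpow_reflected[of a d R Q] R Q pad(1) \<open>d < b\<close> by auto
  moreover have "d \<in> {0..1}" "R d \<in> {0..1}" using R[rule_format, of d] pab(2,3) pad(1) \<open>d < b\<close> by auto
  ultimately show False
    using is_group01_not_splits_interval_funpow[OF G \<open>R \<in> G\<close> \<open>Q \<in> G\<close>] by blast
qed

lemma succ_fixed_pairs_not_linked:
  assumes G: "is_group01 G" "C1_close_to_id G"
    and ab: "succ_fixed_pair G a b" and cd: "succ_fixed_pair G c d"
    and one: "card ({a<..<b} \<inter> {c, d}) = 1"
  shows False
proof -
  have "c < d" using succ_fixed_pair_bounds(1)[OF cd] .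
  then have "(c \<in> {a<..<b}) \<noteq> (d \<in> {a<..<b})"
    using one by (cases "c \<in> {a<..<b}"; cases "d \<in> {a<..<b}") auto
  then consider "a < c" "c < b" "b \<le> d" | "c < a" "a < d" "d \<le> b" | "c = a" "d < b"
    using \<open>c < d\<close> by fastforce
  then show False
    by cases (use succ_fixed_pairs_not_crossing[OF G ab cd] succ_fixed_pairs_not_crossing[OF G cd ab]
        succ_fixed_pairs_not_nested_left[OF G ab] cd in auto)
qed

theorem theoremt:
  fixes G :: "(real \<Rightarrow> real) set"
  assumes "is_group01 G" and "C1_close_to_id G"
  shows "without_linked_fixed_points G"
  unfolding without_linked_fixed_points_def linked_def
  using succ_fixed_pairs_not_linked[OF assms] by blast

end
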